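(* There are absolute constants $B_0$ and $M$ such that the following holds. Let $k,k'$ be integers with $1\le k\le k'\le k+10$, $u_1=e^{ikx}e^{-k^2t}$, $u_2=e^{ik'y}e^{-(k')^2t}$. For every $c_1>0$ and $t_1\ge0$, with $c_2>0$ defined by $c_1e^{-k^2t_1}=c_2e^{-(k')^2t_1}$, there exist a $C^2$ complex function $u$ and a continuous $\mathbb{C}^2$-valued vector field $B$ with $|B|\le B_0$ on $\mathbb{T}^2\times[t_1,t_1+\frac7{2k}]$ such that $\dot u=\Delta u+B\cdot\nabla u$ there, and: for $t\in[t_1,t_1+\frac1{2k}]$, $u=c_1u_1$ and $B=0$; for $t\in[t_1+\frac3k,t_1+\frac7{2k}]$, $u=c_2u_2$ and $B=0$; and for $t\in[t_1,t_1+\frac7{2k}]$, $u=f(t)e^{ikx}+g(t)e^{ik'y}$ with $f,g\in C^2$ satisfying, for $0\le\alpha\le2$, $|f^{(\alpha)}(t)|\le Mc_1k^{2\alpha}e^{-k^2t}$ and $|g^{(\alpha)}(t)|\le Mc_2(k')^{2\alpha}e^{-(k')^2t}$.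
   Context: $\mathbb{T}^2=(\mathbb{R}/2\pi\mathbb{Z})^2$ with coordinates $(x,y)$; $t$ the third coordinate; $\dot u=\partial_tu$; $\Delta$ and $\nabla$ are in the spatial variables $(x,y)$, and $B\cdot\nabla u=B_1\partial_xu+B_2\partial_yu$. *)

theory Defs
  imports "HOL-Analysis.Analysis"
begin

type_synonym pt = "real \<times> real \<times> real"  (* (x, y, t) *)

definition C2_on_with :: "pt set \<Rightarrow> (pt \<Rightarrow> complex) \<Rightarrow> (pt \<Rightarrow> pt \<Rightarrow>\<^sub>L complex)
    \<Rightarrow> (pt \<Rightarrow> pt \<Rightarrow>\<^sub>L (pt \<Rightarrow>\<^sub>L complex)) \<Rightarrow> bool" where
  "C2_on_with S u Du D2u \<longleftrightarrow>
     (\<forall>p\<in>S. (u has_derivative blinfun_apply (Du p)) (at p within S)) \<and>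
     (\<forall>p\<in>S. (Du has_derivative blinfun_apply (D2u p)) (at p within S)) \<and>
     continuous_on S D2u"

definition C2_real_with :: "real set \<Rightarrow> (real \<Rightarrow> complex) \<Rightarrow> (real \<Rightarrow> complex)
    \<Rightarrow> (real \<Rightarrow> complex) \<Rightarrow> bool" where
  "C2_real_with I f f1 f2 \<longleftrightarrow>
     (\<forall>t\<in>I. (f has_vector_derivative f1 t) (at t within I)) \<and>
     (\<forall>t\<in>I. (f1 has_vector_derivative f2 t) (at t within I)) \<and>
     continuous_on I f2"

text \<open>2pi-periodicity in x and y (functions on the torus T^2 times time).\<close>
definition torus_periodic :: "(pt \<Rightarrow> 'a) \<Rightarrow> bool" where
  "torus_periodic u \<longleftrightarrow> (\<forall>x y t. u (x + 2*pi, y, t) = u (x, y, t) \<and> u (x, y + 2*pi, t) = u (x, y, t))"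

definition dir_x :: pt where "dir_x = (1, 0, 0)"
definition dir_y :: pt where "dir_y = (0, 1, 0)"
definition dir_t :: pt where "dir_t = (0, 0, 1)"

end

theory Submission
  imports Defs
begin

text \<open>The solution is a sum of the two modes, u = f(t) e^{ikx} + g(t) e^{ik'y}, and the drift
  B = (a(t) e^{i(k'y - kx)}, h(t) e^{i(kx - k'y)}) makes B.grad map each mode onto the other, so the
  equation reduces to the two ODEs f' = -k^2 f + i k' h g and g' = -k'^2 g + i k a f. We prescribe
  f = c1 e^{-k^2 t} (1 - s^2) and g = c2 e^{-k'^2 t} (1 - (1 - s)^2) for a C^2 switch s rising from
  0 to 1 on [t1 + 1/k, t1 + 2/k], and solve the ODEs for a and h. Both are O(s'/k) times the ratio
  of the two decay factors; s' = O(k), and k' \<le> k + 10 keeps that ratio below e^420 on the time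
  window, so B is bounded by an absolute constant.\<close>

section \<open>A C^2 step function\<close>

lemma has_real_derivative_max0_power:
  assumes "n \<ge> 1"
  shows "((\<lambda>x::real. (max 0 x) ^ Suc n) has_real_derivative real (Suc n) * (max 0 x) ^ n) (at x)"
proof (cases "x = 0")
  case True
  have "((\<lambda>y. ((max 0 y) ^ Suc n - (max 0 x) ^ Suc n) / (y - x)) \<longlongrightarrow> 0) (at x)"
  proof (rule Lim_null_comparison)
    show "\<forall>\<^sub>F y in at x. norm (((max 0 y) ^ Suc n - (max 0 x) ^ Suc n) / (y - x)) \<le> \<bar>y\<bar> ^ n"
      using True assms by (intro always_eventually) (auto simp: max_def abs_mult power_abs)
    show "((\<lambda>y. \<bar>y\<bar> ^ n) \<longlongrightarrow> 0) (at x)"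
      using True assms by (auto intro!: tendsto_eq_intros)
  qed
  then show ?thesis
    using True assms by (simp add: has_field_derivative_iff zero_power)
next
  case False
  define S where "S = (if x > 0 then {0<..} else {..<0::real})"
  have S: "open S" "x \<in> S" using False by (auto simp: S_def)
  have "((\<lambda>y. if x > 0 then y ^ Suc n else 0) has_real_derivative real (Suc n) * (max 0 x) ^ n) (at x)"
  proof (cases "x > 0")
    case True
    then show ?thesis using DERIV_pow[of "Suc n" x] by simp
  qed (use False assms in \<open>auto simp: zero_power\<close>)
  then show ?thesis
    by (rule has_field_derivative_transform_within_open[OF _ S]) (auto simp: S_def)
qed

lemma quotient_has_second_derivative:
  fixes n d :: "real \<Rightarrow> real"
  assumes n: "\<And>x. (n has_real_derivative n1 x) (at x)" "\<And>x. (n1 has_real_derivative n2 x) (at x)"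
    and d: "\<And>x. (d has_real_derivative d1 x) (at x)" "\<And>x. (d1 has_real_derivative d2 x) (at x)"
    and nonzero: "\<And>x. d x \<noteq> 0"
  shows "((\<lambda>x. n x / d x) has_real_derivative (n1 x * d x - n x * d1 x) / (d x)\<^sup>2) (at x)"
    and "((\<lambda>x. (n1 x * d x - n x * d1 x) / (d x)\<^sup>2) has_real_derivative
           ((n2 x * d x - n x * d2 x) * d x - 2 * (n1 x * d x - n x * d1 x) * d1 x) / (d x) ^ 3) (at x)"
proof -
  show "((\<lambda>x. n x / d x) has_real_derivative (n1 x * d x - n x * d1 x) / (d x)\<^sup>2) (at x)"
    using DERIV_divide[OF n(1) d(1) nonzero] by (simp add: power2_eq_square)
  have num: "((\<lambda>x. n1 x * d x - n x * d1 x) has_real_derivative n2 x * d x - n x * d2 x) (at x)"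
    by (rule derivative_eq_intros n d refl)+ simp
  show "((\<lambda>x. (n1 x * d x - n x * d1 x) / (d x)\<^sup>2) has_real_derivative
           ((n2 x * d x - n x * d2 x) * d x - 2 * (n1 x * d x - n x * d1 x) * d1 x) / (d x) ^ 3) (at x)"
    by (rule DERIV_cong[OF DERIV_divide[OF num DERIV_power[OF d(1), of 2]]])
      (use nonzero[of x] in \<open>simp_all add: field_split_simps eval_nat_numeral\<close>)
qed

definition ramp :: "real \<Rightarrow> real" where "ramp x = (max 0 x) ^ 3"

lemma ramp_has_derivative: "(ramp has_real_derivative 3 * (max 0 x)\<^sup>2) (at x)"
  using has_real_derivative_max0_power[of 2 x] by (simp add: ramp_def[abs_def] numeral_3_eq_3)

lemma ramp_derivative_has_derivative: "((\<lambda>x. 3 * (max 0 x)\<^sup>2) has_real_derivative 6 * max 0 x) (at x)"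
  using DERIV_cmult[OF has_real_derivative_max0_power[of 1 x], of 3] by (simp add: numeral_2_eq_2)

text \<open>The denominator never vanishes, so the step is as smooth as the ramp, i.e. C^2.\<close>
definition step :: "real \<Rightarrow> real" where "step x = ramp x / (ramp x + ramp (1 - x))"

definition step1 :: "real \<Rightarrow> real" where "step1 = deriv step"
definition step2 :: "real \<Rightarrow> real" where "step2 = deriv step1"

lemma ramp_sum_pos: "ramp x + ramp (1 - x) > 0"
  by (cases "x > 0") (auto simp: ramp_def intro: add_pos_nonneg add_nonneg_pos)

lemma step_derivatives:
  shows "(step has_real_derivative step1 x) (at x)"
    and "(step1 has_real_derivative step2 x) (at x)"
    and "isCont step2 x"
proof -
  define r1 where "r1 (x::real) = 3 * (max 0 x)\<^sup>2" for x
  define r2 where "r2 (x::real) = 6 * max 0 x" for x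
  have r: "(ramp has_real_derivative r1 x) (at x)" "(r1 has_real_derivative r2 x) (at x)" for x
    unfolding r1_def[abs_def] r2_def by (rule ramp_has_derivative ramp_derivative_has_derivative)+
  define d where "d x = ramp x + ramp (1 - x)" for x
  define d1 where "d1 x = r1 x - r1 (1 - x)" for x
  define d2 where "d2 x = r2 x + r2 (1 - x)" for x
  have d: "(d has_real_derivative d1 x) (at x)" "(d1 has_real_derivative d2 x) (at x)" for x
    unfolding d_def[abs_def] d1_def[abs_def] d2_def
    by (rule derivative_eq_intros r refl DERIV_chain2[OF r(1)] DERIV_chain2[OF r(2)] | simp)+
  have nonzero: "d x \<noteq> 0" for x
    using ramp_sum_pos[of x] by (simp add: d_def)
  have step_eq: "step = (\<lambda>x. ramp x / d x)"
    by (simp add: step_def[abs_def] d_def)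
  note q = quotient_has_second_derivative[OF r d nonzero]
  have step1_eq: "step1 = (\<lambda>x. (r1 x * d x - ramp x * d1 x) / (d x)\<^sup>2)"
    unfolding step1_def step_eq using q(1) by (intro ext DERIV_imp_deriv)
  show "(step has_real_derivative step1 x) (at x)"
    unfolding step_eq step1_eq by (rule q(1))
  have step2_eq: "step2 = (\<lambda>x. ((r2 x * d x - ramp x * d2 x) * d x - 2 * (r1 x * d x - ramp x * d1 x) * d1 x) / (d x) ^ 3)"
    unfolding step2_def step1_eq using q(2) by (intro ext DERIV_imp_deriv)
  show "(step1 has_real_derivative step2 x) (at x)"
    unfolding step2_eq step1_eq by (rule q(2))
  show "isCont step2 x"
    using nonzero[of x] unfolding step2_eq d_def d1_def d2_def r1_def r2_def ramp_def
    by (auto intro!: continuous_intros)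
qed

lemma step_bounds: "0 \<le> step x" "step x \<le> 1"
  using ramp_sum_pos[of x] by (auto simp: step_def ramp_def)

lemma step_eq_0: "x \<le> 0 \<Longrightarrow> step x = 0"
  by (simp add: step_def ramp_def)

lemma step_eq_1: "1 \<le> x \<Longrightarrow> step x = 1"
  using ramp_sum_pos[of x] by (simp add: step_def ramp_def)

lemma step_derivatives_vanish_outside:
  assumes "x < 0 \<or> 1 < x"
  shows "step1 x = 0" and "step2 x = 0"
proof -
  define e where "e y = (if y < 0 then - y else y - 1)" for y :: real
  have e_pos: "0 < e y" if "y < 0 \<or> 1 < y" for y
    using that by (auto simp: e_def)
  have same_side: "(y < 0 \<and> z < 0) \<or> (1 < y \<and> 1 < z)"
    if "y < 0 \<or> 1 < y" "\<bar>y - z\<bar> < e y" for y z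
    using that by (auto simp: e_def abs_if split: if_splits)
  have step1_0: "step1 y = 0" if "y < 0 \<or> 1 < y" for y
  proof (rule DERIV_local_const[OF step_derivatives(1)[of y] e_pos[OF that]], intro allI impI)
    fix z assume "\<bar>y - z\<bar> < e y"
    from same_side[OF that this] show "step y = step z"
      by (auto simp: step_eq_0 step_eq_1)
  qed
  show "step1 x = 0" using assms by (rule step1_0)
  show "step2 x = 0"
  proof (rule DERIV_local_const[OF step_derivatives(2)[of x] e_pos[OF assms]], intro allI impI)
    fix z assume "\<bar>x - z\<bar> < e x"
    from same_side[OF assms this] show "step1 x = step1 z"
      by (auto simp: step1_0)
  qed
qed

lemma bdd_above_abs_if_continuous_vanishing_outside:
  fixes h :: "real \<Rightarrow> real"
  assumes "\<And>x. isCont h x" and "\<And>x. x \<notin> {a..b} \<Longrightarrow> h x = 0"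
  shows "bdd_above (range (\<lambda>x. \<bar>h x\<bar>))"
proof -
  have "compact (h ` {a..b})"
    by (intro compact_continuous_image continuous_at_imp_continuous_on) (auto simp: assms(1))
  then obtain C where C: "\<And>y. y \<in> h ` {a..b} \<Longrightarrow> norm y \<le> C"
    using compact_imp_bounded bounded_iff by metis
  have "\<bar>h x\<bar> \<le> max 0 C" for x
    using C[of "h x"] assms(2)[of x] by (cases "x \<in> {a..b}") auto
  then show ?thesis by (intro bdd_aboveI2)
qed

definition step1_sup :: real where "step1_sup = (SUP x. \<bar>step1 x\<bar>)"
definition step2_sup :: real where "step2_sup = (SUP x. \<bar>step2 x\<bar>)"

lemma abs_step_derivatives_le: "\<bar>step1 x\<bar> \<le> step1_sup" "\<bar>step2 x\<bar> \<le> step2_sup"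
proof -
  have "bdd_above (range (\<lambda>x. \<bar>step1 x\<bar>))"
    by (rule bdd_above_abs_if_continuous_vanishing_outside[where a = 0 and b = 1])
      (auto intro: DERIV_isCont[OF step_derivatives(2)] step_derivatives_vanish_outside(1))
  moreover have "bdd_above (range (\<lambda>x. \<bar>step2 x\<bar>))"
    by (rule bdd_above_abs_if_continuous_vanishing_outside[where a = 0 and b = 1])
      (auto intro: step_derivatives(3) step_derivatives_vanish_outside(2))
  ultimately show "\<bar>step1 x\<bar> \<le> step1_sup" "\<bar>step2 x\<bar> \<le> step2_sup"
    unfolding step1_sup_def step2_sup_def by (auto intro: cSUP_upper)
qed

lemma step_sup_nonneg: "0 \<le> step1_sup" "0 \<le> step2_sup"
  using abs_step_derivatives_le[of 0] by linarith+

section \<open>Two-mode functions on the torus\<close>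

definition partials_blinfun :: "'v::real_normed_vector \<times> 'v \<times> 'v \<Rightarrow> pt \<Rightarrow>\<^sub>L 'v" where
  "partials_blinfun q = Blinfun (\<lambda>w. fst w *\<^sub>R fst q + fst (snd w) *\<^sub>R fst (snd q) + snd (snd w) *\<^sub>R snd (snd q))"

lemma partials_blinfun_apply:
  "partials_blinfun q w = fst w *\<^sub>R fst q + fst (snd w) *\<^sub>R fst (snd q) + snd (snd w) *\<^sub>R snd (snd q)"
proof -
  have "linear (\<lambda>w::pt. fst w *\<^sub>R fst q + fst (snd w) *\<^sub>R fst (snd q) + snd (snd w) *\<^sub>R snd (snd q))"
    by (rule linearI) (auto simp: algebra_simps)
  then show ?thesis
    by (simp add: partials_blinfun_def bounded_linear_Blinfun_apply linear_conv_bounded_linear)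
qed

lemma partials_blinfun_dirs:
  "partials_blinfun q dir_x = fst q" "partials_blinfun q dir_y = fst (snd q)"
  "partials_blinfun q dir_t = snd (snd q)"
  by (simp_all add: partials_blinfun_apply dir_x_def dir_y_def dir_t_def)

lemma bounded_linear_partials_blinfun:
  "bounded_linear (partials_blinfun :: 'v::euclidean_space \<times> 'v \<times> 'v \<Rightarrow> _)"
  unfolding linear_conv_bounded_linear[symmetric]
  by (rule linearI) (auto intro!: blinfun_eqI simp: partials_blinfun_apply blinfun.add_left blinfun.scaleR_left algebra_simps)

definition second_partials_blinfun ::
    "('v::euclidean_space \<times> 'v \<times> 'v) \<times> ('v \<times> 'v \<times> 'v) \<times> ('v \<times> 'v \<times> 'v) \<Rightarrow> pt \<Rightarrow>\<^sub>L pt \<Rightarrow>\<^sub>L 'v" where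
  "second_partials_blinfun Q = Blinfun (\<lambda>w. partials_blinfun
     (partials_blinfun (fst Q) w, partials_blinfun (fst (snd Q)) w, partials_blinfun (snd (snd Q)) w))"

lemma second_partials_blinfun_apply:
  "second_partials_blinfun Q w = partials_blinfun
     (partials_blinfun (fst Q) w, partials_blinfun (fst (snd Q)) w, partials_blinfun (snd (snd Q)) w)"
proof -
  have "linear (\<lambda>w. partials_blinfun
     (partials_blinfun (fst Q) w, partials_blinfun (fst (snd Q)) w, partials_blinfun (snd (snd Q)) w))"
    by (rule linearI) (auto intro!: blinfun_eqI simp: partials_blinfun_apply blinfun.add_left blinfun.scaleR_left algebra_simps)
  then show ?thesis
    by (simp add: second_partials_blinfun_def bounded_linear_Blinfun_apply linear_conv_bounded_linear)
qed

lemma second_partials_blinfun_diagonal: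
  "second_partials_blinfun Q dir_x dir_x = fst (fst Q)"
  "second_partials_blinfun Q dir_y dir_y = fst (snd (fst (snd Q)))"
  by (simp_all add: second_partials_blinfun_apply partials_blinfun_dirs)

lemma bounded_linear_second_partials_blinfun:
  "bounded_linear (second_partials_blinfun :: _ \<Rightarrow> pt \<Rightarrow>\<^sub>L pt \<Rightarrow>\<^sub>L 'v::euclidean_space)"
  unfolding linear_conv_bounded_linear[symmetric]
  by (rule linearI)
    (auto intro!: blinfun_eqI simp: second_partials_blinfun_apply partials_blinfun_apply
      blinfun.add_left blinfun.scaleR_left algebra_simps)

lemma has_derivative_partials_blinfun:
  fixes a b c :: "pt \<Rightarrow> 'v::euclidean_space"
  assumes "(a has_derivative partials_blinfun A) (at p)" "(b has_derivative partials_blinfun B) (at p)"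
    "(c has_derivative partials_blinfun C) (at p)"
  shows "((\<lambda>p. partials_blinfun (a p, b p, c p)) has_derivative second_partials_blinfun (A, B, C)) (at p)"
  using bounded_linear.has_derivative[OF bounded_linear_partials_blinfun
      has_derivative_Pair[OF assms(1) has_derivative_Pair[OF assms(2,3)]]]
  by (rule has_derivative_eq_rhs) (simp add: fun_eq_iff second_partials_blinfun_apply)

definition mode_sum :: "(real \<Rightarrow> complex) \<Rightarrow> (real \<Rightarrow> complex) \<Rightarrow> real \<Rightarrow> real \<Rightarrow> pt \<Rightarrow> complex" where
  "mode_sum F G K K' p = F (snd (snd p)) * exp (\<i> * of_real (K * fst p))
                       + G (snd (snd p)) * exp (\<i> * of_real (K' * fst (snd p)))"

lemma mode_sum_apply:
  "mode_sum F G K K' (x, y, t) = F t * exp (\<i> * of_real (K * x)) + G t * exp (\<i> * of_real (K' * y))"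
  by (simp add: mode_sum_def)

definition mode_sum_partials ::
    "(real \<Rightarrow> complex) \<Rightarrow> (real \<Rightarrow> complex) \<Rightarrow> (real \<Rightarrow> complex) \<Rightarrow> (real \<Rightarrow> complex) \<Rightarrow> real \<Rightarrow> real
      \<Rightarrow> pt \<Rightarrow> complex \<times> complex \<times> complex" where
  "mode_sum_partials F F1 G G1 K K' p =
     (mode_sum (\<lambda>t. \<i> * of_real K * F t) (\<lambda>_. 0) K K' p,
      mode_sum (\<lambda>_. 0) (\<lambda>t. \<i> * of_real K' * G t) K K' p,
      mode_sum F1 G1 K K' p)"

lemma has_vector_derivative_plane_wave:
  "((\<lambda>x. exp (\<i> * of_real (c * x))) has_vector_derivative \<i> * of_real c * exp (\<i> * of_real (c * x))) (at x)"
proof -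
  have "((\<lambda>z. exp (\<i> * of_real c * z)) has_field_derivative \<i> * of_real c * exp (\<i> * of_real c * of_real x)) (at (of_real x))"
    by (auto intro!: derivative_eq_intros)
  from has_vector_derivative_real_field[OF this] show ?thesis
    by (simp add: mult.assoc)
qed

lemma has_derivative_compose_linear:
  assumes "bounded_linear l" "(h has_vector_derivative h') (at (l p))"
  shows "((\<lambda>p. h (l p)) has_derivative (\<lambda>w. l w *\<^sub>R h')) (at p)"
  using has_derivative_compose[OF bounded_linear_imp_has_derivative[OF assms(1)]
      assms(2)[unfolded has_vector_derivative_def]] .

lemma has_derivative_mode_sum:
  assumes "\<And>t. (F has_vector_derivative F1 t) (at t)" "\<And>t. (G has_vector_derivative G1 t) (at t)"
  shows "(mode_sum F G K K' has_derivative partials_blinfun (mode_sum_partials F F1 G G1 K K' p)) (at p)"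
proof -
  have lin: "bounded_linear (\<lambda>p::pt. fst p)" "bounded_linear (\<lambda>p::pt. fst (snd p))"
    "bounded_linear (\<lambda>p::pt. snd (snd p))"
    by (auto intro: bounded_linear_fst bounded_linear_compose[OF bounded_linear_fst bounded_linear_snd]
        bounded_linear_compose[OF bounded_linear_snd bounded_linear_snd])
  note d = has_derivative_compose_linear[OF lin(3) assms(1)] has_derivative_compose_linear[OF lin(3) assms(2)]
    has_derivative_compose_linear[OF lin(1) has_vector_derivative_plane_wave]
    has_derivative_compose_linear[OF lin(2) has_vector_derivative_plane_wave]
  show ?thesis
    unfolding mode_sum_def[abs_def]
    using has_derivative_add[OF has_derivative_mult[OF d(1,3)] has_derivative_mult[OF d(2,4)]]
    by (rule has_derivative_eq_rhs)
      (auto simp: fun_eq_iff partials_blinfun_apply mode_sum_partials_def mode_sum_def algebra_simps)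
qed

lemma isCont_mode_sum:
  assumes "\<And>t. isCont F t" "\<And>t. isCont G t"
  shows "isCont (mode_sum F G K K') p"
  unfolding mode_sum_def[abs_def]
  by (intro continuous_intros isCont_o2[where f = "\<lambda>p. snd (snd p)", OF _ assms(1)]
      isCont_o2[where f = "\<lambda>p. snd (snd p)", OF _ assms(2)])

definition mode_sum_D ::
    "(real \<Rightarrow> complex) \<Rightarrow> (real \<Rightarrow> complex) \<Rightarrow> (real \<Rightarrow> complex) \<Rightarrow> (real \<Rightarrow> complex) \<Rightarrow> real \<Rightarrow> real
      \<Rightarrow> pt \<Rightarrow> pt \<Rightarrow>\<^sub>L complex" where
  "mode_sum_D F F1 G G1 K K' p = partials_blinfun (mode_sum_partials F F1 G G1 K K' p)"

definition mode_sum_D2 ::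
    "(real \<Rightarrow> complex) \<Rightarrow> (real \<Rightarrow> complex) \<Rightarrow> (real \<Rightarrow> complex) \<Rightarrow> (real \<Rightarrow> complex) \<Rightarrow> (real \<Rightarrow> complex)
      \<Rightarrow> (real \<Rightarrow> complex) \<Rightarrow> real \<Rightarrow> real \<Rightarrow> pt \<Rightarrow> pt \<Rightarrow>\<^sub>L pt \<Rightarrow>\<^sub>L complex" where
  "mode_sum_D2 F F1 F2 G G1 G2 K K' p = second_partials_blinfun
     (mode_sum_partials (\<lambda>t. \<i> * of_real K * F t) (\<lambda>t. \<i> * of_real K * F1 t) (\<lambda>_. 0) (\<lambda>_. 0) K K' p,
      mode_sum_partials (\<lambda>_. 0) (\<lambda>_. 0) (\<lambda>t. \<i> * of_real K' * G t) (\<lambda>t. \<i> * of_real K' * G1 t) K K' p,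
      mode_sum_partials F1 F2 G1 G2 K K' p)"

lemma C2_on_with_mode_sum:
  assumes F: "\<And>t. (F has_vector_derivative F1 t) (at t)" "\<And>t. (F1 has_vector_derivative F2 t) (at t)"
      "\<And>t. isCont F2 t"
    and G: "\<And>t. (G has_vector_derivative G1 t) (at t)" "\<And>t. (G1 has_vector_derivative G2 t) (at t)"
      "\<And>t. isCont G2 t"
  shows "C2_on_with S (mode_sum F G K K') (mode_sum_D F F1 G G1 K K') (mode_sum_D2 F F1 F2 G G1 G2 K K')"
proof -
  have scaled: "((\<lambda>t. c * H t) has_vector_derivative c * H' t) (at t)"
    if "\<And>t. (H has_vector_derivative H' t) (at t)" for c and H H' :: "real \<Rightarrow> complex" and t
    using that by (rule has_vector_derivative_mult_right)
  have zero: "((\<lambda>_. 0) has_vector_derivative 0) (at t)" for t :: real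
    by (rule has_vector_derivative_const)
  have D: "(mode_sum F G K K' has_derivative mode_sum_D F F1 G G1 K K' p) (at p)" for p
    unfolding mode_sum_D_def by (rule has_derivative_mode_sum[OF F(1) G(1)])
  have partials: "mode_sum_partials F F1 G G1 K K' = (\<lambda>p.
      (mode_sum (\<lambda>t. \<i> * of_real K * F t) (\<lambda>_. 0) K K' p,
       mode_sum (\<lambda>_. 0) (\<lambda>t. \<i> * of_real K' * G t) K K' p, mode_sum F1 G1 K K' p))"
    by (simp add: fun_eq_iff mode_sum_partials_def)
  have D2: "(mode_sum_D F F1 G G1 K K' has_derivative mode_sum_D2 F F1 F2 G G1 G2 K K' p) (at p)" for p
    unfolding mode_sum_D_def[abs_def] partials mode_sum_D2_def
    by (intro has_derivative_partials_blinfun has_derivative_mode_sum scaled F G zero)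
  have cont: "isCont F t" "isCont F1 t" "isCont G t" "isCont G1 t" for t
    by (rule has_vector_derivative_continuous F(1,2) G(1,2))+
  have "isCont (mode_sum_D2 F F1 F2 G G1 G2 K K') p" for p
    unfolding mode_sum_D2_def[abs_def] mode_sum_partials_def
    by (intro bounded_linear.isCont[OF bounded_linear_second_partials_blinfun] continuous_intros
        isCont_mode_sum cont F(3) G(3))
  then show ?thesis
    unfolding C2_on_with_def
    using D D2 by (auto intro: has_derivative_at_withinI continuous_at_imp_continuous_on)
qed

lemma C2_real_with_of_derivatives_at:
  assumes "\<And>t. (F has_vector_derivative F1 t) (at t)" "\<And>t. (F1 has_vector_derivative F2 t) (at t)"
    and "\<And>t. isCont F2 t"
  shows "C2_real_with I F F1 F2"
proof -
  have "(F has_vector_derivative F1 t) (at t within I)" "(F1 has_vector_derivative F2 t) (at t within I)" for t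
    by (rule has_vector_derivative_at_within[OF assms(1)] has_vector_derivative_at_within[OF assms(2)])+
  moreover have "continuous_on I F2"
    using assms(3) by (simp add: continuous_at_imp_continuous_on)
  ultimately show ?thesis
    by (simp add: C2_real_with_def)
qed

lemma mode_sum_D_dirs:
  "mode_sum_D F F1 G G1 K K' (x, y, t) dir_x = \<i> * of_real K * F t * exp (\<i> * of_real (K * x))"
  "mode_sum_D F F1 G G1 K K' (x, y, t) dir_y = \<i> * of_real K' * G t * exp (\<i> * of_real (K' * y))"
  "mode_sum_D F F1 G G1 K K' (x, y, t) dir_t = mode_sum F1 G1 K K' (x, y, t)"
  by (simp_all add: mode_sum_D_def partials_blinfun_dirs mode_sum_partials_def mode_sum_apply)

lemma mode_sum_D2_diagonal:
  "mode_sum_D2 F F1 F2 G G1 G2 K K' (x, y, t) dir_x dir_x = - (of_real K)\<^sup>2 * F t * exp (\<i> * of_real (K * x))"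
  "mode_sum_D2 F F1 F2 G G1 G2 K K' (x, y, t) dir_y dir_y = - (of_real K')\<^sup>2 * G t * exp (\<i> * of_real (K' * y))"
  by (simp_all add: mode_sum_D2_def second_partials_blinfun_diagonal mode_sum_partials_def mode_sum_apply
      power2_eq_square algebra_simps)

text \<open>B_1 d/dx turns the e^{iKx} mode into the e^{iK'y} mode and B_2 d/dy does the converse.\<close>
definition drift :: "(real \<Rightarrow> complex) \<Rightarrow> (real \<Rightarrow> complex) \<Rightarrow> real \<Rightarrow> real \<Rightarrow> pt \<Rightarrow> complex \<times> complex" where
  "drift a h K K' p =
     (a (snd (snd p)) * exp (\<i> * of_real (K' * fst (snd p) - K * fst p)),
      h (snd (snd p)) * exp (\<i> * of_real (K * fst p - K' * fst (snd p))))"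

lemma mode_sum_drift_heat_equation:
  assumes "\<And>t. F1 t = - (of_real K)\<^sup>2 * F t + h t * (\<i> * of_real K') * G t"
    and "\<And>t. G1 t = - (of_real K')\<^sup>2 * G t + a t * (\<i> * of_real K) * F t"
  shows "mode_sum_D F F1 G G1 K K' p dir_t =
           mode_sum_D2 F F1 F2 G G1 G2 K K' p dir_x dir_x + mode_sum_D2 F F1 F2 G G1 G2 K K' p dir_y dir_y
           + fst (drift a h K K' p) * mode_sum_D F F1 G G1 K K' p dir_x
           + snd (drift a h K K' p) * mode_sum_D F F1 G G1 K K' p dir_y"
proof -
  obtain x y t where p: "p = (x, y, t)" by (cases p) auto
  have exp_shift: "exp (\<i> * of_real (v - u)) * exp (\<i> * of_real u) = exp (\<i> * of_real v)" for u v :: real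
    by (simp add: exp_add[symmetric] algebra_simps)
  show ?thesis
    unfolding p mode_sum_D_dirs mode_sum_D2_diagonal mode_sum_apply assms drift_def fst_conv snd_conv
    using exp_shift[of "K * x" "K' * y"] exp_shift[of "K' * y" "K * x"]
    by (simp add: algebra_simps)
qed

lemma exp_i_periodic: "exp (\<i> * of_real (r + of_int n * (2 * pi))) = exp (\<i> * of_real r)"
  using exp_plus_2pin[of "\<i> * of_real r" n] by (simp add: algebra_simps)

lemma torus_periodic_mode_sum: "torus_periodic (mode_sum F G (of_int k) (of_int k'))"
  using exp_i_periodic[of "of_int k * _" k] exp_i_periodic[of "of_int k' * _" k']
  by (simp add: torus_periodic_def mode_sum_apply algebra_simps)

lemma torus_periodic_drift: "torus_periodic (drift a h (of_int k) (of_int k'))"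
  using exp_i_periodic[of "of_int k' * _ - of_int k * _" "- k"] exp_i_periodic[of "of_int k * _ - of_int k' * _" k]
    exp_i_periodic[of "of_int k' * _ - of_int k * _" k'] exp_i_periodic[of "of_int k * _ - of_int k' * _" "- k'"]
  by (simp add: torus_periodic_def drift_def algebra_simps)

lemma isCont_drift:
  assumes "\<And>t. isCont a t" "\<And>t. isCont h t"
  shows "isCont (drift a h K K') p"
  unfolding drift_def[abs_def]
  by (intro continuous_intros isCont_o2[where f = "\<lambda>p. snd (snd p)", OF _ assms(1)]
      isCont_o2[where f = "\<lambda>p. snd (snd p)", OF _ assms(2)])

section \<open>Damped amplitude profiles\<close>

definition decay :: "real \<Rightarrow> real \<Rightarrow> real \<Rightarrow> real" where "decay c K t = c * exp (- K\<^sup>2 * t)"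

text \<open>The defect of the profile from the free heat flow is -2 w w' decay (see damped_profile1_eq); it
  carries the factor w, which the partner profile 1 - (1 - w)^2 = w (2 - w) also has, so the coupling
  coefficients solving the ODEs have no singularity.\<close>
definition damped_profile :: "real \<Rightarrow> real \<Rightarrow> (real \<Rightarrow> real) \<Rightarrow> real \<Rightarrow> real" where
  "damped_profile c K w t = decay c K t * (1 - (w t)\<^sup>2)"

definition damped_profile1 :: "real \<Rightarrow> real \<Rightarrow> (real \<Rightarrow> real) \<Rightarrow> (real \<Rightarrow> real) \<Rightarrow> real \<Rightarrow> real" where
  "damped_profile1 c K w w1 t = decay c K t * (- 2 * w t * w1 t - K\<^sup>2 * (1 - (w t)\<^sup>2))"

definition damped_profile2 ::
    "real \<Rightarrow> real \<Rightarrow> (real \<Rightarrow> real) \<Rightarrow> (real \<Rightarrow> real) \<Rightarrow> (real \<Rightarrow> real) \<Rightarrow> real \<Rightarrow> real" where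
  "damped_profile2 c K w w1 w2 t = decay c K t *
     (- 2 * ((w1 t)\<^sup>2 + w t * w2 t) + 4 * K\<^sup>2 * w t * w1 t + K ^ 4 * (1 - (w t)\<^sup>2))"

lemma has_real_derivative_decay: "(decay c K has_real_derivative - K\<^sup>2 * decay c K t) (at t)"
  unfolding decay_def[abs_def] by (auto intro!: derivative_eq_intros)

lemma damped_profile_derivatives:
  assumes w: "\<And>t. (w has_real_derivative w1 t) (at t)" "\<And>t. (w1 has_real_derivative w2 t) (at t)"
  shows "(damped_profile c K w has_real_derivative damped_profile1 c K w w1 t) (at t)"
    and "(damped_profile1 c K w w1 has_real_derivative damped_profile2 c K w w1 w2 t) (at t)"
  unfolding damped_profile_def[abs_def] damped_profile1_def[abs_def] damped_profile2_def
  by (rule derivative_eq_intros has_real_derivative_decay w refl | simp add: algebra_simps power2_eq_square power4_eq_xxxx)+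

lemma isCont_damped_profile2:
  assumes "\<And>t. (w has_real_derivative w1 t) (at t)" "\<And>t. (w1 has_real_derivative w2 t) (at t)"
    and "\<And>t. isCont w2 t"
  shows "isCont (damped_profile2 c K w w1 w2) t"
  using assms DERIV_isCont[OF has_real_derivative_decay]
  unfolding damped_profile2_def[abs_def] by (intro continuous_intros) (auto intro: DERIV_isCont)

lemma damped_profile1_eq:
  "damped_profile1 c K w w1 t = - K\<^sup>2 * damped_profile c K w t - 2 * w t * w1 t * decay c K t"
  by (simp add: damped_profile_def damped_profile1_def algebra_simps)

lemma damping_factor_bounds:
  fixes W v1 v2 K D1 D2 M :: real
  assumes W: "0 \<le> W" "W \<le> 1" and K: "1 \<le> K"
    and v1: "\<bar>v1\<bar> \<le> K * D1" and v2: "\<bar>v2\<bar> \<le> K\<^sup>2 * D2"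
    and M: "1 + 4 * D1 + 2 * D1\<^sup>2 + 2 * D2 \<le> M" and D: "0 \<le> D1" "0 \<le> D2"
  shows "\<bar>- 2 * W * v1 - K\<^sup>2 * (1 - W\<^sup>2)\<bar> \<le> M * K\<^sup>2"
    and "\<bar>- 2 * (v1\<^sup>2 + W * v2) + 4 * K\<^sup>2 * W * v1 + K ^ 4 * (1 - W\<^sup>2)\<bar> \<le> M * K ^ 4"
proof -
  have KK: "1 \<le> K * K"
    using mult_mono[OF K K] K by simp
  have Kpow: "K \<le> K\<^sup>2" "K\<^sup>2 \<le> K ^ 4" "K * K\<^sup>2 \<le> K ^ 4"
    using mult_left_mono[OF K, of K] mult_left_mono[OF KK, of "K * K"] mult_left_mono[OF K, of "K * K * K"] K
    by (auto simp: power2_eq_square power4_eq_xxxx ac_simps)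
  have absW: "\<bar>W\<bar> \<le> 1" using W by simp
  have Wv1: "\<bar>W * v1\<bar> \<le> K * D1"
    using mult_mono[OF absW v1] by (simp add: abs_mult)
  have Wv2: "\<bar>W * v2\<bar> \<le> K ^ 4 * D2"
    using mult_mono[OF absW v2] mult_right_mono[OF Kpow(2) D(2)] by (simp add: abs_mult)
  have v1sq: "v1\<^sup>2 \<le> K ^ 4 * D1\<^sup>2"
    using power_mono[OF v1, of 2] mult_right_mono[OF Kpow(2), of "D1\<^sup>2"] by (simp add: power_mult_distrib)
  have KWv1: "\<bar>K\<^sup>2 * (W * v1)\<bar> \<le> K ^ 4 * D1"
    using mult_left_mono[OF Wv1, of "K\<^sup>2"] mult_right_mono[OF Kpow(3) D(1)] by (simp add: abs_mult ac_simps)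
  have KW: "0 \<le> K\<^sup>2 * (1 - W\<^sup>2)" "K\<^sup>2 * (1 - W\<^sup>2) \<le> K\<^sup>2"
      "0 \<le> K ^ 4 * (1 - W\<^sup>2)" "K ^ 4 * (1 - W\<^sup>2) \<le> K ^ 4"
    using W by (auto simp: power_le_one mult_left_le)
  have "\<bar>- 2 * (W * v1) - K\<^sup>2 * (1 - W\<^sup>2)\<bar> \<le> K\<^sup>2 + 2 * (K\<^sup>2 * D1)"
    using Wv1 KW(1,2) mult_right_mono[OF Kpow(1) D(1)] by linarith
  also have "\<dots> \<le> K\<^sup>2 * M"
    using mult_left_mono[of "1 + 2 * D1" M "K\<^sup>2"] M D zero_le_power2[of D1] by (simp add: algebra_simps)
  finally show "\<bar>- 2 * W * v1 - K\<^sup>2 * (1 - W\<^sup>2)\<bar> \<le> M * K\<^sup>2"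
    by (simp add: ac_simps)
  have "\<bar>- 2 * (v1\<^sup>2 + W * v2) + 4 * (K\<^sup>2 * (W * v1)) + K ^ 4 * (1 - W\<^sup>2)\<bar>
      \<le> K ^ 4 + 4 * (K ^ 4 * D1) + 2 * (K ^ 4 * D1\<^sup>2) + 2 * (K ^ 4 * D2)"
    using v1sq Wv2 KWv1 KW(3,4) zero_le_power2[of v1] by (smt (verit))
  also have "\<dots> \<le> K ^ 4 * M"
    using mult_left_mono[OF M, of "K ^ 4"] by (simp add: algebra_simps)
  finally show "\<bar>- 2 * (v1\<^sup>2 + W * v2) + 4 * K\<^sup>2 * W * v1 + K ^ 4 * (1 - W\<^sup>2)\<bar> \<le> M * K ^ 4"
    by (simp add: ac_simps)
qed

lemma damped_profile_bounds:
  assumes c: "0 \<le> c" and K: "1 \<le> K" and w: "0 \<le> w t" "w t \<le> 1"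
    and w1: "\<bar>w1 t\<bar> \<le> K * D1" and w2: "\<bar>w2 t\<bar> \<le> K\<^sup>2 * D2"
    and M: "1 + 4 * D1 + 2 * D1\<^sup>2 + 2 * D2 \<le> M" and D: "0 \<le> D1" "0 \<le> D2"
  shows "\<bar>damped_profile c K w t\<bar> \<le> M * c * exp (- K\<^sup>2 * t)"
    and "\<bar>damped_profile1 c K w w1 t\<bar> \<le> M * c * K\<^sup>2 * exp (- K\<^sup>2 * t)"
    and "\<bar>damped_profile2 c K w w1 w2 t\<bar> \<le> M * c * K ^ 4 * exp (- K\<^sup>2 * t)"
proof -
  note q = damping_factor_bounds[OF w K w1 w2 M D]
  have e: "0 \<le> decay c K t" using c by (simp add: decay_def)
  have scaled: "\<bar>decay c K t * q\<bar> \<le> B * decay c K t" if "\<bar>q\<bar> \<le> B" for q B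
    using mult_left_mono[OF that e] by (simp add: abs_mult abs_of_nonneg[OF e] ac_simps)
  have "\<bar>1 - (w t)\<^sup>2\<bar> \<le> 1"
    using w by (auto simp: abs_le_iff power_le_one)
  moreover have "1 \<le> M"
    using M D zero_le_power2[of D1] by linarith
  ultimately have "\<bar>1 - (w t)\<^sup>2\<bar> \<le> M" by linarith
  then show "\<bar>damped_profile c K w t\<bar> \<le> M * c * exp (- K\<^sup>2 * t)"
    using scaled[of "1 - (w t)\<^sup>2" M] by (simp add: damped_profile_def decay_def ac_simps)
  show "\<bar>damped_profile1 c K w w1 t\<bar> \<le> M * c * K\<^sup>2 * exp (- K\<^sup>2 * t)"
    using scaled[OF q(1)] by (simp add: damped_profile1_def decay_def ac_simps)
  show "\<bar>damped_profile2 c K w w1 w2 t\<bar> \<le> M * c * K ^ 4 * exp (- K\<^sup>2 * t)"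
    using scaled[OF q(2)] by (simp add: damped_profile2_def decay_def ac_simps)
qed

lemma decay_shift: "decay c K t = decay c K t0 * exp (- K\<^sup>2 * (t - t0))"
  by (simp add: decay_def mult.assoc exp_add[symmetric] algebra_simps)

lemma decay_pos: "0 < c \<Longrightarrow> 0 < decay c K t"
  by (simp add: decay_def)

section \<open>Transferring the energy from one mode to the other\<close>

locale mode_transfer =
  fixes K K' c1 c2 t1 :: real
  assumes frequencies: "1 \<le> K" "K \<le> K'" "K' \<le> K + 10"
    and amplitudes_pos: "0 < c1" "0 < c2"
    and matching: "decay c1 K t1 = decay c2 K' t1"
begin

definition switch :: "real \<Rightarrow> real" where "switch t = step (K * (t - t1) - 1)"
definition switch1 :: "real \<Rightarrow> real" where "switch1 t = K * step1 (K * (t - t1) - 1)"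
definition switch2 :: "real \<Rightarrow> real" where "switch2 t = K\<^sup>2 * step2 (K * (t - t1) - 1)"

abbreviation "F \<equiv> damped_profile c1 K switch"
abbreviation "F1 \<equiv> damped_profile1 c1 K switch switch1"
abbreviation "F2 \<equiv> damped_profile2 c1 K switch switch1 switch2"
abbreviation "G \<equiv> damped_profile c2 K' (\<lambda>t. 1 - switch t)"
abbreviation "G1 \<equiv> damped_profile1 c2 K' (\<lambda>t. 1 - switch t) (\<lambda>t. - switch1 t)"
abbreviation "G2 \<equiv> damped_profile2 c2 K' (\<lambda>t. 1 - switch t) (\<lambda>t. - switch1 t) (\<lambda>t. - switch2 t)"

definition coupling_x :: "real \<Rightarrow> real" where
  "coupling_x t = - 2 * switch1 t * decay c2 K' t / (K * decay c1 K t * (1 + switch t))"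
definition coupling_y :: "real \<Rightarrow> real" where
  "coupling_y t = 2 * switch1 t * decay c1 K t / (K' * decay c2 K' t * (2 - switch t))"

lemma switch_derivatives:
  shows "(switch has_real_derivative switch1 t) (at t)"
    and "(switch1 has_real_derivative switch2 t) (at t)"
    and "isCont switch2 t"
proof -
  have inner: "((\<lambda>t. K * (t - t1) - 1) has_real_derivative K) (at t)" for t
    by (auto intro!: derivative_eq_intros)
  show "(switch has_real_derivative switch1 t) (at t)"
    using DERIV_chain2[OF step_derivatives(1) inner] by (simp add: switch_def[abs_def] switch1_def mult.commute)
  show "(switch1 has_real_derivative switch2 t) (at t)"
    using DERIV_cmult[OF DERIV_chain2[OF step_derivatives(2) inner], of K]
    by (simp add: switch1_def[abs_def] switch2_def power2_eq_square ac_simps)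
  show "isCont switch2 t"
    unfolding switch2_def[abs_def] by (intro continuous_intros isCont_o2[OF _ step_derivatives(3)])
qed

lemma switch_bounds:
  "0 \<le> switch t" "switch t \<le> 1" "\<bar>switch1 t\<bar> \<le> K * step1_sup" "\<bar>switch2 t\<bar> \<le> K\<^sup>2 * step2_sup"
  using step_bounds abs_step_derivatives_le frequencies(1)
  by (auto simp: switch_def switch1_def switch2_def abs_mult intro: mult_left_mono)

lemma switch_early:
  assumes "t \<le> t1 + 1 / (2 * K)"
  shows "switch t = 0" "switch1 t = 0"
proof -
  have "K * (t - t1) \<le> K * (1 / (2 * K))"
    using assms frequencies(1) by (intro mult_left_mono) auto
  then have "K * (t - t1) - 1 < 0"
    using frequencies(1) by simp
  then show "switch t = 0" "switch1 t = 0"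
    by (simp_all add: switch_def switch1_def step_eq_0 step_derivatives_vanish_outside)
qed

lemma switch_late:
  assumes "t1 + 3 / K \<le> t"
  shows "switch t = 1" "switch1 t = 0"
proof -
  have "K * (3 / K) \<le> K * (t - t1)"
    using assms frequencies(1) by (intro mult_left_mono) auto
  then have "1 < K * (t - t1) - 1"
    using frequencies(1) by simp
  then show "switch t = 1" "switch1 t = 0"
    by (simp_all add: switch_def switch1_def step_eq_1 step_derivatives_vanish_outside)
qed

lemma amplitude_derivatives:
  shows "(F has_real_derivative F1 t) (at t)" "(F1 has_real_derivative F2 t) (at t)" "isCont F2 t"
    and "(G has_real_derivative G1 t) (at t)" "(G1 has_real_derivative G2 t) (at t)" "isCont G2 t"
proof -
  have reflected: "((\<lambda>t. 1 - switch t) has_real_derivative - switch1 t) (at t)"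
    "((\<lambda>t. - switch1 t) has_real_derivative - switch2 t) (at t)" for t
    by (auto intro!: derivative_eq_intros switch_derivatives)
  show "(F has_real_derivative F1 t) (at t)" "(F1 has_real_derivative F2 t) (at t)"
    by (rule damped_profile_derivatives[OF switch_derivatives(1,2)])+
  show "(G has_real_derivative G1 t) (at t)" "(G1 has_real_derivative G2 t) (at t)"
    by (rule damped_profile_derivatives[OF reflected])+
  show "isCont F2 t" "isCont G2 t"
    by (rule isCont_damped_profile2 switch_derivatives reflected continuous_intros)+
qed

lemma amplitude_bounds:
  assumes "1 + 4 * step1_sup + 2 * step1_sup\<^sup>2 + 2 * step2_sup \<le> M"
  shows "\<bar>F t\<bar> \<le> M * c1 * exp (- K\<^sup>2 * t)" "\<bar>F1 t\<bar> \<le> M * c1 * K\<^sup>2 * exp (- K\<^sup>2 * t)"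
    "\<bar>F2 t\<bar> \<le> M * c1 * K ^ 4 * exp (- K\<^sup>2 * t)"
    and "\<bar>G t\<bar> \<le> M * c2 * exp (- K'\<^sup>2 * t)" "\<bar>G1 t\<bar> \<le> M * c2 * K'\<^sup>2 * exp (- K'\<^sup>2 * t)"
    "\<bar>G2 t\<bar> \<le> M * c2 * K' ^ 4 * exp (- K'\<^sup>2 * t)"
proof -
  have K': "1 \<le> K'" using frequencies by simp
  have "\<bar>- switch1 t\<bar> \<le> K' * step1_sup"
    using switch_bounds(3)[of t] mult_right_mono[OF frequencies(2) step_sup_nonneg(1)] by simp
  moreover have "\<bar>- switch2 t\<bar> \<le> K'\<^sup>2 * step2_sup"
    using switch_bounds(4)[of t] frequencies power_mono[OF frequencies(2), of 2]
      mult_right_mono[OF _ step_sup_nonneg(2), of "K\<^sup>2" "K'\<^sup>2"] by simp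
  ultimately show "\<bar>G t\<bar> \<le> M * c2 * exp (- K'\<^sup>2 * t)" "\<bar>G1 t\<bar> \<le> M * c2 * K'\<^sup>2 * exp (- K'\<^sup>2 * t)"
    "\<bar>G2 t\<bar> \<le> M * c2 * K' ^ 4 * exp (- K'\<^sup>2 * t)"
    using damped_profile_bounds[OF _ K' _ _ _ _ assms step_sup_nonneg] amplitudes_pos switch_bounds[of t]
    by auto
  show "\<bar>F t\<bar> \<le> M * c1 * exp (- K\<^sup>2 * t)" "\<bar>F1 t\<bar> \<le> M * c1 * K\<^sup>2 * exp (- K\<^sup>2 * t)"
    "\<bar>F2 t\<bar> \<le> M * c1 * K ^ 4 * exp (- K\<^sup>2 * t)"
    using damped_profile_bounds[OF _ frequencies(1) _ _ _ _ assms step_sup_nonneg] amplitudes_pos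
      switch_bounds[of t] by auto
qed

lemma amplitude_equations:
  "F1 t = - K\<^sup>2 * F t - coupling_y t * K' * G t"
  "G1 t = - K'\<^sup>2 * G t - coupling_x t * K * F t"
proof -
  have nonzero: "decay c1 K t \<noteq> 0" "decay c2 K' t \<noteq> 0" "K \<noteq> 0" "K' \<noteq> 0" "1 + switch t \<noteq> 0" "2 - switch t \<noteq> 0"
    using decay_pos amplitudes_pos frequencies switch_bounds(1,2)[of t] by (auto simp: less_imp_neq[symmetric])
  show "F1 t = - K\<^sup>2 * F t - coupling_y t * K' * G t"
    using nonzero unfolding damped_profile1_eq coupling_y_def damped_profile_def
    by (simp add: field_simps power2_eq_square)
  have denominator: "K * decay c1 K t * (1 + switch t) \<noteq> 0"
    using nonzero by simp
  have "coupling_x t * K * F t = - 2 * switch1 t * decay c2 K' t / (K * decay c1 K t * (1 + switch t))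
      * (K * decay c1 K t * (1 + switch t)) * (1 - switch t)"
    by (simp add: coupling_x_def damped_profile_def power2_eq_square algebra_simps)
  also have "\<dots> = - 2 * switch1 t * decay c2 K' t * (1 - switch t)"
    using denominator by simp
  finally show "G1 t = - K'\<^sup>2 * G t - coupling_x t * K * F t"
    by (simp add: damped_profile1_eq algebra_simps)
qed

text \<open>On the time window (K'^2 - K^2)(t - t1) \<le> 10 (2K + 10) 7/(2K) \<le> 420: this is where k' \<le> k + 10
  enters, keeping the drift that feeds the faster decaying mode bounded independently of k.\<close>
lemma decay_comparison:
  assumes "t1 \<le> t" "t \<le> t1 + 7 / (2 * K)"
  shows "decay c2 K' t \<le> decay c1 K t" "decay c1 K t \<le> exp 420 * decay c2 K' t"
proof -
  define \<delta> where "\<delta> = t - t1"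
  have \<delta>: "0 \<le> \<delta>" "\<delta> \<le> 7 / (2 * K)" using assms by (auto simp: \<delta>_def)
  have K: "0 < K" "K\<^sup>2 \<le> K'\<^sup>2" using frequencies by (auto intro: power_mono)
  have "K'\<^sup>2 - K\<^sup>2 = (K' - K) * (K' + K)" by (simp add: algebra_simps power2_eq_square)
  also have "\<dots> \<le> 10 * (12 * K)" using frequencies by (intro mult_mono) auto
  finally have "(K'\<^sup>2 - K\<^sup>2) * \<delta> \<le> (120 * K) * (7 / (2 * K))"
    using \<delta> K by (intro mult_mono) auto
  also have "\<dots> = 420" using K by simp
  finally have gap: "(K'\<^sup>2 - K\<^sup>2) * \<delta> \<le> 420" .
  have shifted: "decay c1 K t = decay c1 K t1 * exp (- K\<^sup>2 * \<delta>)"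
    "decay c2 K' t = decay c1 K t1 * exp (- K'\<^sup>2 * \<delta>)"
    using decay_shift[of c1 K t t1] decay_shift[of c2 K' t t1] matching by (simp_all add: \<delta>_def)
  have c: "0 < decay c1 K t1" using decay_pos amplitudes_pos by blast
  show "decay c2 K' t \<le> decay c1 K t"
    unfolding shifted using c K \<delta> by (simp add: mult_right_mono)
  have "exp (- K\<^sup>2 * \<delta>) \<le> exp (420 + - K'\<^sup>2 * \<delta>)"
    using gap by (simp add: algebra_simps)
  then show "decay c1 K t \<le> exp 420 * decay c2 K' t"
    unfolding shifted exp_add using c by (simp add: ac_simps)
qed

lemma coupling_factors:
  shows "0 < decay c1 K t" "0 < decay c2 K' t"
    and "0 \<le> switch t" "switch t \<le> 1" "\<bar>switch1 t\<bar> \<le> K' * step1_sup"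
  using decay_pos amplitudes_pos switch_bounds[of t]
    mult_right_mono[OF frequencies(2) step_sup_nonneg(1)] by auto

lemma coupling_x_bound:
  assumes "t1 \<le> t" "t \<le> t1 + 7 / (2 * K)"
  shows "\<bar>coupling_x t\<bar> \<le> 2 * step1_sup"
proof -
  have pos: "0 < K" "0 < K'" "0 < decay c1 K t" "0 < decay c2 K' t" "0 \<le> switch t" "switch t \<le> 1"
    using frequencies coupling_factors[of t] by auto
  have "\<bar>coupling_x t\<bar> = 2 * \<bar>switch1 t\<bar> * decay c2 K' t / (K * decay c1 K t * (1 + switch t))"
    using pos by (simp add: coupling_x_def abs_mult abs_divide)
  also have "\<dots> \<le> 2 * (K * step1_sup) * decay c1 K t / (K * decay c1 K t)"
  proof (rule frac_le)
    show "2 * \<bar>switch1 t\<bar> * decay c2 K' t \<le> 2 * (K * step1_sup) * decay c1 K t"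
      using switch_bounds(3) decay_comparison(1)[OF assms] pos step_sup_nonneg(1) by (intro mult_mono) auto
    show "K * decay c1 K t \<le> K * decay c1 K t * (1 + switch t)"
      using pos by simp
  qed (use pos step_sup_nonneg(1) in auto)
  also have "\<dots> = 2 * step1_sup" using pos by simp
  finally show ?thesis .
qed

lemma coupling_y_bound:
  assumes "t1 \<le> t" "t \<le> t1 + 7 / (2 * K)"
  shows "\<bar>coupling_y t\<bar> \<le> 2 * step1_sup * exp 420"
proof -
  have pos: "0 < K" "0 < K'" "0 < decay c1 K t" "0 < decay c2 K' t" "0 \<le> switch t" "switch t \<le> 1"
    using frequencies coupling_factors[of t] by auto
  have "\<bar>coupling_y t\<bar> = 2 * \<bar>switch1 t\<bar> * decay c1 K t / (K' * decay c2 K' t * (2 - switch t))"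
    using pos by (simp add: coupling_y_def abs_mult abs_divide)
  also have "\<dots> \<le> 2 * (K' * step1_sup) * (exp 420 * decay c2 K' t) / (K' * decay c2 K' t)"
  proof (rule frac_le)
    show "2 * \<bar>switch1 t\<bar> * decay c1 K t \<le> 2 * (K' * step1_sup) * (exp 420 * decay c2 K' t)"
      using coupling_factors(5) decay_comparison(2)[OF assms] pos step_sup_nonneg(1) by (intro mult_mono) auto
    show "K' * decay c2 K' t \<le> K' * decay c2 K' t * (2 - switch t)"
      using pos by simp
  qed (use pos step_sup_nonneg(1) in auto)
  also have "\<dots> = 2 * step1_sup * exp 420" using pos by simp
  finally show ?thesis .
qed

lemma isCont_couplings: "isCont coupling_x t" "isCont coupling_y t"
proof -
  have "isCont switch t" "isCont switch1 t" "isCont (decay c k) t" for c k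
    using switch_derivatives(1,2) DERIV_isCont[OF has_real_derivative_decay] DERIV_isCont by blast+
  moreover have "K * decay c1 K t * (1 + switch t) \<noteq> 0" "K' * decay c2 K' t * (2 - switch t) \<noteq> 0"
    using decay_pos amplitudes_pos frequencies switch_bounds(1,2)[of t] by (auto simp: less_imp_neq[symmetric])
  ultimately show "isCont coupling_x t" "isCont coupling_y t"
    unfolding coupling_x_def[abs_def] coupling_y_def[abs_def] by (auto intro!: continuous_intros)
qed

lemma amplitudes_early:
  assumes "t \<le> t1 + 1 / (2 * K)"
  shows "F t = c1 * exp (- K\<^sup>2 * t)" "G t = 0" "coupling_x t = 0" "coupling_y t = 0"
  using switch_early[OF assms]
  by (simp_all add: damped_profile_def decay_def coupling_x_def coupling_y_def)

lemma amplitudes_late: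
  assumes "t1 + 3 / K \<le> t"
  shows "F t = 0" "G t = c2 * exp (- K'\<^sup>2 * t)" "coupling_x t = 0" "coupling_y t = 0"
  using switch_late[OF assms]
  by (simp_all add: damped_profile_def decay_def coupling_x_def coupling_y_def)

abbreviation "f \<equiv> \<lambda>t. complex_of_real (F t)"
abbreviation "f1 \<equiv> \<lambda>t. complex_of_real (F1 t)"
abbreviation "f2 \<equiv> \<lambda>t. complex_of_real (F2 t)"
abbreviation "g \<equiv> \<lambda>t. complex_of_real (G t)"
abbreviation "g1 \<equiv> \<lambda>t. complex_of_real (G1 t)"
abbreviation "g2 \<equiv> \<lambda>t. complex_of_real (G2 t)"

abbreviation "transfer_drift \<equiv> drift (\<lambda>t. \<i> * of_real (coupling_x t)) (\<lambda>t. \<i> * of_real (coupling_y t)) K K'"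

lemma complex_amplitude_derivatives:
  shows "(f has_vector_derivative f1 t) (at t)" "(f1 has_vector_derivative f2 t) (at t)" "isCont f2 t"
    and "(g has_vector_derivative g1 t) (at t)" "(g1 has_vector_derivative g2 t) (at t)" "isCont g2 t"
  by (rule has_vector_derivative_of_real amplitude_derivatives continuous_intros)+

lemma C2_real_with_amplitudes: "C2_real_with I f f1 f2" "C2_real_with I g g1 g2"
  by (rule C2_real_with_of_derivatives_at complex_amplitude_derivatives)+

lemma C2_on_with_solution:
  "C2_on_with S (mode_sum f g K K') (mode_sum_D f f1 g g1 K K') (mode_sum_D2 f f1 f2 g g1 g2 K K')"
  by (rule C2_on_with_mode_sum complex_amplitude_derivatives)+

lemma solution_equation:
  "mode_sum_D f f1 g g1 K K' p dir_t =
     mode_sum_D2 f f1 f2 g g1 g2 K K' p dir_x dir_x + mode_sum_D2 f f1 f2 g g1 g2 K K' p dir_y dir_y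
     + fst (transfer_drift p) * mode_sum_D f f1 g g1 K K' p dir_x
     + snd (transfer_drift p) * mode_sum_D f f1 g g1 K K' p dir_y"
proof (rule mode_sum_drift_heat_equation)
  show "f1 t = - (of_real K)\<^sup>2 * f t + \<i> * of_real (coupling_y t) * (\<i> * of_real K') * g t"
    "g1 t = - (of_real K')\<^sup>2 * g t + \<i> * of_real (coupling_x t) * (\<i> * of_real K) * f t" for t
    by (simp_all add: amplitude_equations algebra_simps)
qed

lemma continuous_on_transfer_drift: "continuous_on S transfer_drift"
  by (intro continuous_at_imp_continuous_on ballI isCont_drift continuous_intros isCont_couplings)

lemma norm_transfer_drift_le:
  assumes "p \<in> UNIV \<times> UNIV \<times> {t1 .. t1 + 7 / (2 * K)}"
  shows "norm (transfer_drift p) \<le> 2 * step1_sup * (1 + exp 420)"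
proof -
  obtain x y t where p: "p = (x, y, t)" and t: "t1 \<le> t" "t \<le> t1 + 7 / (2 * K)"
    using assms by auto
  have "norm (transfer_drift p) \<le> norm (fst (transfer_drift p)) + norm (snd (transfer_drift p))"
    using norm_Pair_le[of "fst (transfer_drift p)" "snd (transfer_drift p)"] by simp
  also have "\<dots> = \<bar>coupling_x t\<bar> + \<bar>coupling_y t\<bar>"
    by (simp add: p drift_def norm_mult)
  also have "\<dots> \<le> 2 * step1_sup * (1 + exp 420)"
    using coupling_x_bound[OF t] coupling_y_bound[OF t] by (simp add: algebra_simps)
  finally show ?thesis .
qed

lemma solution_early:
  assumes "t \<in> {t1 .. t1 + 1 / (2 * K)}"
  shows "mode_sum f g K K' (x, y, t) = of_real c1 * (exp (\<i> * of_real (K * x)) * of_real (exp (- K\<^sup>2 * t)))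
    \<and> transfer_drift (x, y, t) = 0"
  using amplitudes_early[of t] assms by (simp add: mode_sum_apply drift_def zero_prod_def)

lemma solution_late:
  assumes "t \<in> {t1 + 3 / K .. t1 + 7 / (2 * K)}"
  shows "mode_sum f g K K' (x, y, t) = of_real c2 * (exp (\<i> * of_real (K' * y)) * of_real (exp (- K'\<^sup>2 * t)))
    \<and> transfer_drift (x, y, t) = 0"
  using amplitudes_late[of t] assms by (simp add: mode_sum_apply drift_def zero_prod_def)

end

theorem mainTheorem17:
  shows "\<exists>B0 M :: real. \<forall>(k::int) (k'::int) (c1::real) (t1::real).
    1 \<le> k \<and> k \<le> k' \<and> k' \<le> k + 10 \<and> c1 > 0 \<and> t1 \<ge> 0 \<longrightarrow>
    (\<forall>c2::real. c2 > 0 \<and> c1 * exp (- (real_of_int k)\<^sup>2 * t1) = c2 * exp (- (real_of_int k')\<^sup>2 * t1) \<longrightarrow>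
    (\<exists>(u :: pt \<Rightarrow> complex) Du D2u (B :: pt \<Rightarrow> complex \<times> complex)
        (f :: real \<Rightarrow> complex) f1 f2 (g :: real \<Rightarrow> complex) g1 g2.
      let I = {t1 .. t1 + 7 / (2 * real_of_int k)};
          S = (UNIV :: real set) \<times> (UNIV :: real set) \<times> I;
          u1 = (\<lambda>(x::real, y::real, t::real). exp (\<i> * of_real (real_of_int k * x)) * of_real (exp (- (real_of_int k)\<^sup>2 * t)));
          u2 = (\<lambda>(x::real, y::real, t::real). exp (\<i> * of_real (real_of_int k' * y)) * of_real (exp (- (real_of_int k')\<^sup>2 * t)))
      in torus_periodic u \<and> torus_periodic B \<and>
         C2_on_with S u Du D2u \<and>
         continuous_on S B \<and>
         (\<forall>p\<in>S. norm (B p) \<le> B0) \<and>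
         (\<forall>p\<in>S. Du p dir_t = D2u p dir_x dir_x + D2u p dir_y dir_y
                               + fst (B p) * Du p dir_x + snd (B p) * Du p dir_y) \<and>
         (\<forall>x y t. t \<in> {t1 .. t1 + 1 / (2 * real_of_int k)} \<longrightarrow>
              u (x, y, t) = of_real c1 * u1 (x, y, t) \<and> B (x, y, t) = 0) \<and>
         (\<forall>x y t. t \<in> {t1 + 3 / real_of_int k .. t1 + 7 / (2 * real_of_int k)} \<longrightarrow>
              u (x, y, t) = of_real c2 * u2 (x, y, t) \<and> B (x, y, t) = 0) \<and>
         C2_real_with I f f1 f2 \<and> C2_real_with I g g1 g2 \<and>
         (\<forall>x y t. t \<in> I \<longrightarrow>
              u (x, y, t) = f t * exp (\<i> * of_real (real_of_int k * x))
                          + g t * exp (\<i> * of_real (real_of_int k' * y))) \<and>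
         (\<forall>t\<in>I.
              norm (f t) \<le> M * c1 * exp (- (real_of_int k)\<^sup>2 * t) \<and>
              norm (f1 t) \<le> M * c1 * (real_of_int k)^2 * exp (- (real_of_int k)\<^sup>2 * t) \<and>
              norm (f2 t) \<le> M * c1 * (real_of_int k)^4 * exp (- (real_of_int k)\<^sup>2 * t) \<and>
              norm (g t) \<le> M * c2 * exp (- (real_of_int k')\<^sup>2 * t) \<and>
              norm (g1 t) \<le> M * c2 * (real_of_int k')^2 * exp (- (real_of_int k')\<^sup>2 * t) \<and>
              norm (g2 t) \<le> M * c2 * (real_of_int k')^4 * exp (- (real_of_int k')\<^sup>2 * t))))"
  apply (rule exI[of _ "2 * step1_sup * (1 + exp 420)"],
      rule exI[of _ "1 + 4 * step1_sup + 2 * step1_sup\<^sup>2 + 2 * step2_sup"], intro allI impI, elim conjE)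
  subgoal premises prems for k k' c1 t1 c2
  proof -
    interpret mode_transfer "real_of_int k" "real_of_int k'" c1 c2 t1
      using prems by unfold_locales (simp_all add: decay_def)
    show ?thesis
      unfolding Let_def
      apply (rule exI[of _ "mode_sum f g (real_of_int k) (real_of_int k')"],
          rule exI[of _ "mode_sum_D f f1 g g1 (real_of_int k) (real_of_int k')"],
          rule exI[of _ "mode_sum_D2 f f1 f2 g g1 g2 (real_of_int k) (real_of_int k')"],
          rule exI[of _ transfer_drift], rule exI[of _ f], rule exI[of _ f1], rule exI[of _ f2],
          rule exI[of _ g], rule exI[of _ g1], rule exI[of _ g2])
      apply (intro conjI)
      subgoal by (rule torus_periodic_mode_sum)
      subgoal by (rule torus_periodic_drift)
      subgoal by (rule C2_on_with_solution)
      subgoal by (rule continuous_on_transfer_drift)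
      subgoal by (blast intro: norm_transfer_drift_le)
      subgoal by (blast intro: solution_equation)
      subgoal by (simp add: solution_early)
      subgoal by (simp add: solution_late)
      subgoal by (rule C2_real_with_amplitudes)
      subgoal by (rule C2_real_with_amplitudes)
      subgoal by (simp add: mode_sum_apply)
      subgoal by (intro ballI conjI) (simp_all only: norm_of_real amplitude_bounds[OF order_refl])
      done
  qed
  done

end
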